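(* Let $\mathcal{I}=\{p(\mathbf{x})(1-\sum_{i=1}^n x_i):p\in\mathbb{R}[\mathbf{x}]\}$, equip $\mathbb{R}[\mathbf{x}]/\mathcal{I}$ with the norm $\|f\|=\sup_{\mathbf{x}\in\Delta_{n-1}}|f(\mathbf{x})|$, where $\Delta_{n-1}=\{\mathbf{x}\in\mathbb{R}^n_+:x_1+\dots+x_n=1\}$, and let $L:\mathbb{R}[\mathbf{x}]/\mathcal{I}\to\mathbb{R}$ be a linear operator with $L(\mathbf{x}^\alpha)\ge 0$ for all $\alpha\in\mathbb{N}^n$ and $L(1)\le 1$. Then $L$ is continuous with respect to $\|\cdot\|$.
   Context: $\mathbb{R}[\mathbf{x}]=\mathbb{R}[x_1,\dots,x_n]$; $\mathbf{x}^\alpha=x_1^{\alpha_1}\cdots x_n^{\alpha_n}$. *)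

theory Defs
  imports "HOL-Analysis.Analysis" "HOL-Library.Poly_Mapping"
begin

text \<open>Real polynomials in n variables, the variables indexed by a finite type 'n
  (so n = CARD('n)): a polynomial is a finitely supported map from exponent
  vectors alpha (finitely supported maps from the index type to nat) to real coefficients; the ring structure is
  the one of Poly_Mapping (convolution product).\<close>

type_synonym 'n rpoly = "('n \<Rightarrow>\<^sub>0 nat) \<Rightarrow>\<^sub>0 real"

definition monom_x :: "('n \<Rightarrow>\<^sub>0 nat) \<Rightarrow> 'n rpoly" where
  "monom_x \<alpha> = Poly_Mapping.single \<alpha> 1"

definition var_x :: "'n \<Rightarrow> 'n rpoly" where
  "var_x i = monom_x (Poly_Mapping.single i 1)"

definition peval :: "'n::finite rpoly \<Rightarrow> ('n \<Rightarrow> real) \<Rightarrow> real" where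
  "peval p x = (\<Sum>\<alpha>\<in>Poly_Mapping.keys p. Poly_Mapping.lookup p \<alpha> * (\<Prod>i\<in>UNIV. x i ^ Poly_Mapping.lookup \<alpha> i))"

definition pscale :: "real \<Rightarrow> 'n rpoly \<Rightarrow> 'n rpoly" where
  "pscale c p = Poly_Mapping.map (\<lambda>a. c * a) p"

definition simplex_ideal :: "'n::finite rpoly set" where
  "simplex_ideal = {p * (1 - (\<Sum>i\<in>UNIV. var_x i)) | p. True}"

definition std_simplex :: "('n::finite \<Rightarrow> real) set" where
  "std_simplex = {x. (\<forall>i. 0 \<le> x i) \<and> (\<Sum>i\<in>UNIV. x i) = 1}"

text \<open>The sup norm over the simplex (well defined on the quotient by simplex_ideal).\<close>
definition simplex_norm :: "'n::finite rpoly \<Rightarrow> real" where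
  "simplex_norm f = (SUP x\<in>std_simplex. \<bar>peval f x\<bar>)"

end

theory Submission
  imports Defs
begin

text \<open>
  Let s = x_1 + ... + x_n. Since L vanishes on the ideal, L(p s^M) = L(p); expanding s^M as the sum
  of the monomials x_w = x_(w 0) ... x_(w (M-1)) over all words w of length M shows that the
  nonnegative numbers L(x_w) sum to L(1). Hence the average of h over the letter-frequency vectors
  of the words (points of the simplex), weighted by L(x_w), is bounded by L(1) ||h||. This average
  is L applied to the multinomial Bernstein polynomial of h, and it tends to L(h) as M grows: for a
  monomial x_u of degree k, the product of the letter frequencies of w counts the maps p from [k]
  to [M] with w o p = u. For injective p the matching words have k prescribed letters and M - k
  free ones, so their L-mass is L(x_u s^(M-k)) = L(x_u); every other p contributes at most L(1),
  and the injective maps make up a fraction of all maps that tends to 1.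
\<close>

definition var_sum :: "'n::finite rpoly" where
  "var_sum = (\<Sum>i\<in>UNIV. var_x i)"

definition words :: "nat \<Rightarrow> (nat \<Rightarrow> 'n) set" where
  "words M = {..<M} \<rightarrow>\<^sub>E UNIV"

definition word_monom :: "nat \<Rightarrow> (nat \<Rightarrow> 'n) \<Rightarrow> 'n rpoly" where
  "word_monom M w = (\<Prod>q<M. var_x (w q))"

definition letter_freq :: "nat \<Rightarrow> (nat \<Rightarrow> 'n) \<Rightarrow> 'n \<Rightarrow> real" where
  "letter_freq M w i = real (card {q. q < M \<and> w q = i}) / real M"

lemma prod_monom_x: "finite A \<Longrightarrow> (\<Prod>q\<in>A. monom_x (\<beta> q)) = monom_x (\<Sum>q\<in>A. \<beta> q)"
  by (induction A rule: finite_induct) (auto simp: monom_x_def mult_single)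

lemma word_with_letter_counts:
  fixes f :: "'n \<Rightarrow> nat"
  assumes "finite V"
  obtains k and u :: "nat \<Rightarrow> 'n" where "\<And>i. card {j. j < k \<and> u j = i} = (if i \<in> V then f i else 0)"
  using assms
proof (induction V arbitrary: thesis rule: finite_induct)
  case empty
  show ?case by (rule empty[of 0]) auto
next
  case (insert a V)
  then obtain k and u :: "nat \<Rightarrow> 'n"
    where ku: "\<And>i. card {j. j < k \<and> u j = i} = (if i \<in> V then f i else 0)"
    by blast
  define u' where "u' j = (if j < k then u j else a)" for j
  have "card {j. j < k + f a \<and> u' j = i} = (if i \<in> insert a V then f i else 0)" for i
  proof -
    have "{j. j < k + f a \<and> u' j = i} = {j. j < k \<and> u j = i} \<union> (if i = a then {k..<k + f a} else {})"
      by (auto simp: u'_def)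
    also have "card \<dots> = card {j. j < k \<and> u j = i} + card (if i = a then {k..<k + f a} else {})"
      by (rule card_Un_disjoint) auto
    finally show ?thesis
      using ku \<open>a \<notin> V\<close> by auto
  qed
  then show ?case by (rule insert.prems)
qed

lemma monom_x_eq_prod_var_x:
  fixes u :: "nat \<Rightarrow> 'n"
  assumes "\<And>i. card {j. j < k \<and> u j = i} = Poly_Mapping.lookup \<alpha> i"
  shows "monom_x \<alpha> = (\<Prod>j<k. var_x (u j))"
proof -
  have "\<alpha> = (\<Sum>j<k. Poly_Mapping.single (u j) 1)"
  proof (rule poly_mapping_eqI)
    fix i
    have "Poly_Mapping.lookup (\<Sum>j<k. Poly_Mapping.single (u j) 1) i = (\<Sum>j<k. if u j = i then 1 else 0)"
      by (simp add: lookup_sum lookup_single when_def)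
    also have "\<dots> = card {j. j < k \<and> u j = i}"
      by (simp add: sum.inter_filter[symmetric])
    finally show "Poly_Mapping.lookup \<alpha> i = Poly_Mapping.lookup (\<Sum>j<k. Poly_Mapping.single (u j) 1) i"
      using assms by simp
  qed
  moreover have "(\<Prod>j<k. var_x (u j)) = monom_x (\<Sum>j<k. Poly_Mapping.single (u j) 1)"
    unfolding var_x_def by (rule prod_monom_x) simp
  ultimately show ?thesis
    by simp
qed

lemma prod_word_eq_prod_power_count:
  fixes f :: "'n::finite \<Rightarrow> 'a::comm_monoid_mult" and u :: "nat \<Rightarrow> 'n"
  shows "(\<Prod>j<k. f (u j)) = (\<Prod>i\<in>UNIV. f i ^ card {j. j < k \<and> u j = i})"
proof -
  have "(\<Prod>j<k. f (u j)) = (\<Prod>i\<in>UNIV. \<Prod>j\<in>{j. j \<in> {..<k} \<and> u j = i}. f (u j))"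
    by (rule prod.group[symmetric]) auto
  also have "\<dots> = (\<Prod>i\<in>UNIV. \<Prod>j\<in>{j. j \<in> {..<k} \<and> u j = i}. f i)"
    by (intro prod.cong) auto
  finally show ?thesis by simp
qed

lemma poly_eq_sum_monom_x:
  "h = (\<Sum>\<alpha>\<in>Poly_Mapping.keys h. pscale (Poly_Mapping.lookup h \<alpha>) (monom_x \<alpha>))"
proof (rule poly_mapping_eqI)
  fix \<beta>
  have "Poly_Mapping.lookup (\<Sum>\<alpha>\<in>Poly_Mapping.keys h. pscale (Poly_Mapping.lookup h \<alpha>) (monom_x \<alpha>)) \<beta>
      = (\<Sum>\<alpha>\<in>Poly_Mapping.keys h. if \<alpha> = \<beta> then Poly_Mapping.lookup h \<alpha> else 0)"
    by (simp add: lookup_sum pscale_def monom_x_def lookup_single when_def)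
  also have "\<dots> = Poly_Mapping.lookup h \<beta>"
    by (simp add: in_keys_iff)
  finally show "Poly_Mapping.lookup h \<beta> = Poly_Mapping.lookup (\<Sum>\<alpha>\<in>Poly_Mapping.keys h. pscale (Poly_Mapping.lookup h \<alpha>) (monom_x \<alpha>)) \<beta>"
    by simp
qed

lemma peval_monom_x: "peval (monom_x \<alpha>) x = (\<Prod>i\<in>UNIV. x i ^ Poly_Mapping.lookup \<alpha> i)"
  by (simp add: peval_def monom_x_def)

lemma peval_eq_sum_monom_x:
  "peval h x = (\<Sum>\<alpha>\<in>Poly_Mapping.keys h. Poly_Mapping.lookup h \<alpha> * peval (monom_x \<alpha>) x)"
  unfolding peval_monom_x unfolding peval_def ..

lemma sum_prod_var_x_PiE:
  fixes S :: "'a \<Rightarrow> 'n::finite set"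
  shows "finite A \<Longrightarrow> (\<Sum>w\<in>PiE A S. \<Prod>q\<in>A. var_x (w q)) = (\<Prod>q\<in>A. \<Sum>i\<in>S q. var_x i)"
  by (rule prod_sum_PiE[symmetric]) (auto intro: finite_subset[OF subset_UNIV])

lemma finite_words: "finite (words M :: (nat \<Rightarrow> 'n::finite) set)"
  unfolding words_def by (intro finite_PiE) auto

lemma sum_word_monom: "(\<Sum>w\<in>words M. word_monom M w) = (var_sum :: 'n::finite rpoly) ^ M"
  by (simp add: words_def word_monom_def var_sum_def sum_prod_var_x_PiE)

lemma sum_prod_var_x_prescribed:
  fixes v :: "'a \<Rightarrow> 'n::finite"
  assumes "finite A" and "R \<subseteq> A"
  shows "(\<Sum>w | w \<in> A \<rightarrow>\<^sub>E UNIV \<and> (\<forall>q\<in>R. w q = v q). \<Prod>q\<in>A. var_x (w q))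
    = (\<Prod>q\<in>R. var_x (v q)) * var_sum ^ card (A - R)"
proof -
  define S where "S q = (if q \<in> R then {v q} else UNIV)" for q
  have prescribed_eq: "{w. w \<in> A \<rightarrow>\<^sub>E UNIV \<and> (\<forall>q\<in>R. w q = v q)} = PiE A S"
    using \<open>R \<subseteq> A\<close> by (auto simp: S_def PiE_def Pi_def)
  have "(\<Sum>w | w \<in> A \<rightarrow>\<^sub>E UNIV \<and> (\<forall>q\<in>R. w q = v q). \<Prod>q\<in>A. var_x (w q))
      = (\<Prod>q\<in>A. \<Sum>i\<in>S q. var_x i)"
    unfolding prescribed_eq using \<open>finite A\<close> by (rule sum_prod_var_x_PiE)
  also have "\<dots> = (\<Prod>q\<in>A - R. \<Sum>i\<in>S q. var_x i) * (\<Prod>q\<in>R. \<Sum>i\<in>S q. var_x i)"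
    using assms by (intro prod.subset_diff)
  also have "\<dots> = var_sum ^ card (A - R) * (\<Prod>q\<in>R. var_x (v q))"
    by (simp add: S_def var_sum_def)
  finally show ?thesis by (simp add: mult.commute)
qed

lemma card_word_matchings:
  fixes w :: "nat \<Rightarrow> 'n" and u :: "nat \<Rightarrow> 'n"
  shows "(\<Prod>j<k. card {q. q < M \<and> w q = u j}) = card {p \<in> {..<k} \<rightarrow>\<^sub>E {..<M}. \<forall>j<k. w (p j) = u j}"
proof -
  have "{p \<in> {..<k} \<rightarrow>\<^sub>E {..<M}. \<forall>j<k. w (p j) = u j} = PiE {..<k} (\<lambda>j. {q. q < M \<and> w q = u j})"
    by (auto simp: PiE_def Pi_def)
  then show ?thesis by (simp add: card_PiE)
qed

definition inj_fraction :: "nat \<Rightarrow> nat \<Rightarrow> real" where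
  "inj_fraction k M = real (card {p \<in> {..<k} \<rightarrow>\<^sub>E {..<M}. inj_on p {..<k}}) / real M ^ k"

lemma inj_fraction_eq_prod:
  assumes "k \<le> M" and "0 < M"
  shows "inj_fraction k M = (\<Prod>i<k. 1 - real i / real M)"
proof -
  have "card {p \<in> {..<k} \<rightarrow>\<^sub>E {..<M}. inj_on p {..<k}} = (\<Prod>i<k. M - i)"
    using card_inj_on_subset_funcset[of "{..<k}" "{..<M}" "{..<k}"] by (simp add: atLeast0LessThan)
  then have "inj_fraction k M = (\<Prod>i<k. (real M - real i) / real M)"
    using assms by (simp add: inj_fraction_def of_nat_prod of_nat_diff prod_dividef)
  also have "\<dots> = (\<Prod>i<k. 1 - real i / real M)"
    using assms by (intro prod.cong) (auto simp: field_simps)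
  finally show ?thesis .
qed

lemma inj_fraction_tendsto_1: "inj_fraction k \<longlonglongrightarrow> 1"
proof -
  have "\<forall>\<^sub>F M in sequentially. (\<Prod>i<k. 1 - real i / real M) = inj_fraction k M"
    using eventually_ge_at_top[of "max 1 k"] by eventually_elim (simp add: inj_fraction_eq_prod)
  moreover have "(\<lambda>M. \<Prod>i<k. 1 - real i / real M) \<longlonglongrightarrow> (\<Prod>i<k. 1 - 0)"
    by (intro tendsto_prod tendsto_diff tendsto_const lim_const_over_n)
  ultimately show ?thesis
    by (simp add: tendsto_cong)
qed

lemma std_simplex_coord_le_1: "x \<in> std_simplex \<Longrightarrow> \<bar>x i\<bar> \<le> 1"
  unfolding std_simplex_def using member_le_sum[of i UNIV x] by auto

lemma abs_peval_le_sum_abs_coeffs: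
  assumes "x \<in> std_simplex"
  shows "\<bar>peval h x\<bar> \<le> (\<Sum>\<alpha>\<in>Poly_Mapping.keys h. \<bar>Poly_Mapping.lookup h \<alpha>\<bar>)"
proof -
  have "\<bar>peval (monom_x \<alpha>) x\<bar> \<le> 1" for \<alpha>
    unfolding peval_monom_x abs_prod power_abs
    by (intro prod_le_1 conjI power_le_one std_simplex_coord_le_1[OF assms] zero_le_power abs_ge_zero)
  then have "\<bar>Poly_Mapping.lookup h \<alpha> * peval (monom_x \<alpha>) x\<bar> \<le> \<bar>Poly_Mapping.lookup h \<alpha>\<bar>" for \<alpha>
    by (simp add: abs_mult mult_left_le)
  then show ?thesis
    by (subst peval_eq_sum_monom_x) (intro order.trans[OF sum_abs] sum_mono)
qed

lemma abs_peval_le_simplex_norm: "x \<in> std_simplex \<Longrightarrow> \<bar>peval h x\<bar> \<le> simplex_norm h"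
  unfolding simplex_norm_def
  by (rule cSUP_upper) (auto intro: bdd_aboveI2 abs_peval_le_sum_abs_coeffs)

lemma simplex_norm_nonneg: "0 \<le> simplex_norm (h :: 'n::finite rpoly)"
proof -
  have "(\<lambda>i. if i = (undefined :: 'n) then 1 else 0) \<in> std_simplex"
    by (simp add: std_simplex_def)
  then show ?thesis
    by (meson abs_ge_zero abs_peval_le_simplex_norm order.trans)
qed

lemma letter_freq_in_std_simplex:
  assumes "0 < M"
  shows "letter_freq M w \<in> std_simplex"
proof -
  have "(\<Sum>i\<in>UNIV. real (card {q. q < M \<and> w q = i})) = (\<Sum>i\<in>UNIV. \<Sum>q | q \<in> {..<M} \<and> w q = i. 1)"
    by simp
  also have "\<dots> = real M"
    by (subst sum.group) auto
  finally show ?thesis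
    using assms by (simp add: std_simplex_def letter_freq_def sum_divide_distrib[symmetric])
qed

locale simplex_positive_functional =
  fixes L :: "'n::finite rpoly \<Rightarrow> real"
  assumes additive: "\<And>p q. L (p + q) = L p + L q"
    and homogeneous: "\<And>c p. L (pscale c p) = c * L p"
    and ideal_invariant: "\<And>p q. p - q \<in> simplex_ideal \<Longrightarrow> L p = L q"
    and monom_x_nonneg: "\<And>\<alpha>. 0 \<le> L (monom_x \<alpha>)"
begin

lemma L_zero: "L 0 = 0"
  using additive[of 0 0] by simp

lemma L_sum: "L (sum f A) = (\<Sum>a\<in>A. L (f a))"
  by (induction A rule: infinite_finite_induct) (auto simp: L_zero additive)

lemma L_diff: "L (p - q) = L p - L q"
  using additive[of "p - q" q] by simp

lemma L_eq_sum_monom_x: "L h = (\<Sum>\<alpha>\<in>Poly_Mapping.keys h. Poly_Mapping.lookup h \<alpha> * L (monom_x \<alpha>))"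
  by (subst poly_eq_sum_monom_x) (simp add: L_sum homogeneous)

lemma L_mult_var_sum_power: "L (p * var_sum ^ N) = L p"
proof (rule ideal_invariant)
  have "p * var_sum ^ N - p = p * (var_sum ^ N - 1)"
    by (simp add: algebra_simps)
  also have "\<dots> = (p * - (\<Sum>i<N. var_sum ^ i)) * (1 - var_sum)"
    by (simp add: power_diff_1_eq algebra_simps)
  finally show "p * var_sum ^ N - p \<in> simplex_ideal"
    unfolding simplex_ideal_def var_sum_def by blast
qed

lemma L_one_nonneg: "0 \<le> L 1"
  using monom_x_nonneg[of 0] by (simp add: monom_x_def)

lemma L_prod_var_x_nonneg: "finite A \<Longrightarrow> 0 \<le> L (\<Prod>q\<in>A. var_x (w q))"
  using monom_x_nonneg by (simp add: var_x_def prod_monom_x)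

lemma L_word_monom_nonneg: "0 \<le> L (word_monom M w)"
  unfolding word_monom_def by (simp add: L_prod_var_x_nonneg)

lemma sum_L_word_monom: "(\<Sum>w\<in>words M. L (word_monom M w)) = L 1"
  using L_mult_var_sum_power[of 1 M] by (simp add: L_sum[symmetric] sum_word_monom)

definition matching_mass :: "nat \<Rightarrow> (nat \<Rightarrow> 'n) \<Rightarrow> nat \<Rightarrow> (nat \<Rightarrow> nat) \<Rightarrow> real" where
  "matching_mass M u k p = (\<Sum>w | w \<in> words M \<and> (\<forall>j<k. w (p j) = u j). L (word_monom M w))"

lemma matching_mass_nonneg: "0 \<le> matching_mass M u k p"
  unfolding matching_mass_def by (intro sum_nonneg L_word_monom_nonneg)

lemma matching_mass_le_L_one: "matching_mass M u k p \<le> L 1"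
  unfolding matching_mass_def sum_L_word_monom[of M, symmetric]
  by (intro sum_mono2 finite_words L_word_monom_nonneg) auto

lemma matching_mass_inj:
  assumes "p \<in> {..<k} \<rightarrow>\<^sub>E {..<M}" and "inj_on p {..<k}"
  shows "matching_mass M u k p = L (\<Prod>j<k. var_x (u j))"
proof -
  define v where "v = u \<circ> the_inv_into {..<k} p"
  have image_p: "p ` {..<k} \<subseteq> {..<M}"
    using assms(1) by auto
  have "{w. w \<in> words M \<and> (\<forall>j<k. w (p j) = u j)} = {w. w \<in> {..<M} \<rightarrow>\<^sub>E UNIV \<and> (\<forall>q\<in>p ` {..<k}. w q = v q)}"
    using assms(2) by (auto simp: words_def v_def the_inv_into_f_f)
  then have "matching_mass M u k p = L (\<Sum>w | w \<in> {..<M} \<rightarrow>\<^sub>E UNIV \<and> (\<forall>q\<in>p ` {..<k}. w q = v q). \<Prod>q<M. var_x (w q))"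
    by (simp add: matching_mass_def word_monom_def L_sum)
  also have "\<dots> = L ((\<Prod>q\<in>p ` {..<k}. var_x (v q)) * var_sum ^ card ({..<M} - p ` {..<k}))"
    by (simp only: sum_prod_var_x_prescribed[OF finite_lessThan image_p])
  also have "(\<Prod>q\<in>p ` {..<k}. var_x (v q)) = (\<Prod>j<k. var_x (u j))"
    using assms(2) by (simp add: prod.reindex v_def the_inv_into_f_f)
  finally show ?thesis
    by (simp add: L_mult_var_sum_power)
qed

definition sampled_word_value :: "nat \<Rightarrow> (nat \<Rightarrow> 'n) \<Rightarrow> nat \<Rightarrow> real" where
  "sampled_word_value M u k = (\<Sum>w\<in>words M. L (word_monom M w) * (\<Prod>j<k. letter_freq M w (u j)))"

lemma sampled_word_value_eq_sum_matching_mass: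
  "sampled_word_value M u k = (\<Sum>p\<in>{..<k} \<rightarrow>\<^sub>E {..<M}. matching_mass M u k p) / real M ^ k"
proof -
  have "L (word_monom M w) * (\<Prod>j<k. letter_freq M w (u j))
      = (\<Sum>p | p \<in> {..<k} \<rightarrow>\<^sub>E {..<M} \<and> (\<forall>j<k. w (p j) = u j). L (word_monom M w)) / real M ^ k" for w
    by (simp add: letter_freq_def prod_dividef of_nat_prod card_word_matchings[symmetric])
  then have "sampled_word_value M u k
      = (\<Sum>w\<in>words M. \<Sum>p | p \<in> {..<k} \<rightarrow>\<^sub>E {..<M} \<and> (\<forall>j<k. w (p j) = u j). L (word_monom M w)) / real M ^ k"
    by (simp add: sampled_word_value_def sum_divide_distrib)
  also have "\<dots> = (\<Sum>p\<in>{..<k} \<rightarrow>\<^sub>E {..<M}. matching_mass M u k p) / real M ^ k"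
    unfolding matching_mass_def by (subst sum.swap_restrict) (auto simp: finite_words finite_PiE)
  finally show ?thesis .
qed

lemma abs_sampled_word_value_diff_le:
  assumes "0 < M"
  shows "\<bar>sampled_word_value M u k - L (\<Prod>j<k. var_x (u j))\<bar>
    \<le> (1 - inj_fraction k M) * (L 1 + L (\<Prod>j<k. var_x (u j)))"
proof -
  let ?P = "{..<k} \<rightarrow>\<^sub>E {..<M}" and ?T = "L (\<Prod>j<k. var_x (u j))" and ?\<rho> = "inj_fraction k M"
  let ?I = "{p \<in> ?P. inj_on p {..<k}}"
  define E where "E = (\<Sum>p\<in>?P - ?I. matching_mass M u k p) / real M ^ k"
  have Mk: "0 < real M ^ k"
    using \<open>0 < M\<close> by simp
  have card_I: "card ?I \<le> M ^ k"
    using card_mono[of ?P ?I] by (simp add: card_PiE finite_PiE)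
  have "(\<Sum>p\<in>?P. matching_mass M u k p) = (\<Sum>p\<in>?P - ?I. matching_mass M u k p) + (\<Sum>p\<in>?I. matching_mass M u k p)"
    by (rule sum.subset_diff) (auto simp: finite_PiE)
  also have "(\<Sum>p\<in>?I. matching_mass M u k p) = real (card ?I) * ?T"
    by (simp add: matching_mass_inj)
  finally have sum_eq: "sampled_word_value M u k = E + ?\<rho> * ?T"
    unfolding sampled_word_value_eq_sum_matching_mass E_def inj_fraction_def by (simp add: add_divide_distrib)
  have "(\<Sum>p\<in>?P - ?I. matching_mass M u k p) \<le> real (card (?P - ?I)) * L 1"
    by (intro sum_bounded_above matching_mass_le_L_one)
  also have "real (card (?P - ?I)) = real M ^ k - real (card ?I)"
    using card_I by (simp add: card_Diff_subset finite_PiE card_PiE of_nat_diff)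
  finally have "E \<le> (1 - ?\<rho>) * L 1"
    using Mk by (simp add: E_def inj_fraction_def field_simps)
  moreover have "0 \<le> E"
    unfolding E_def by (intro divide_nonneg_nonneg sum_nonneg matching_mass_nonneg) simp
  moreover have "0 \<le> (1 - ?\<rho>) * ?T"
    using card_I Mk by (simp add: inj_fraction_def L_prod_var_x_nonneg flip: of_nat_le_iff)
  ultimately show ?thesis
    unfolding sum_eq by (simp add: algebra_simps abs_le_iff)
qed

lemma sampled_word_value_tendsto:
  "(\<lambda>M. sampled_word_value M u k) \<longlonglongrightarrow> L (\<Prod>j<k. var_x (u j))"
proof (rule LIM_zero_cancel, rule Lim_null_comparison)
  show "\<forall>\<^sub>F M in sequentially. norm (sampled_word_value M u k - L (\<Prod>j<k. var_x (u j)))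
      \<le> (1 - inj_fraction k M) * (L 1 + L (\<Prod>j<k. var_x (u j)))"
    using eventually_gt_at_top[of 0] by eventually_elim (simp add: abs_sampled_word_value_diff_le)
  have "(\<lambda>M. (1 - inj_fraction k M) * (L 1 + L (\<Prod>j<k. var_x (u j))))
      \<longlonglongrightarrow> (1 - 1) * (L 1 + L (\<Prod>j<k. var_x (u j)))"
    by (intro tendsto_intros inj_fraction_tendsto_1)
  then show "(\<lambda>M. (1 - inj_fraction k M) * (L 1 + L (\<Prod>j<k. var_x (u j)))) \<longlonglongrightarrow> 0"
    by simp
qed

definition bernstein_value :: "nat \<Rightarrow> 'n rpoly \<Rightarrow> real" where
  "bernstein_value M h = (\<Sum>w\<in>words M. L (word_monom M w) * peval h (letter_freq M w))"

lemma bernstein_value_monom_x_tendsto: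
  "(\<lambda>M. bernstein_value M (monom_x \<alpha>)) \<longlonglongrightarrow> L (monom_x \<alpha>)"
proof -
  obtain k and u :: "nat \<Rightarrow> 'n" where counts: "\<And>i. card {j. j < k \<and> u j = i} = Poly_Mapping.lookup \<alpha> i"
    using word_with_letter_counts[of UNIV "Poly_Mapping.lookup \<alpha>"] by auto
  have "peval (monom_x \<alpha>) x = (\<Prod>j<k. x (u j))" for x
    by (simp add: peval_monom_x prod_word_eq_prod_power_count counts)
  then show ?thesis
    using sampled_word_value_tendsto[of u k]
    by (simp add: bernstein_value_def sampled_word_value_def monom_x_eq_prod_var_x[OF counts])
qed

lemma bernstein_value_tendsto: "(\<lambda>M. bernstein_value M h) \<longlonglongrightarrow> L h"
proof -
  have "bernstein_value M h
      = (\<Sum>\<alpha>\<in>Poly_Mapping.keys h. Poly_Mapping.lookup h \<alpha> * bernstein_value M (monom_x \<alpha>))" for M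
    unfolding bernstein_value_def peval_eq_sum_monom_x[of h]
    by (simp add: sum_distrib_left sum_distrib_right mult_ac sum.swap[where B = "Poly_Mapping.keys h"])
  then show ?thesis
    by (simp add: L_eq_sum_monom_x[of h] tendsto_sum tendsto_mult_left bernstein_value_monom_x_tendsto)
qed

lemma abs_bernstein_value_le:
  assumes "0 < M"
  shows "\<bar>bernstein_value M h\<bar> \<le> L 1 * simplex_norm h"
proof -
  have "\<bar>bernstein_value M h\<bar> \<le> (\<Sum>w\<in>words M. \<bar>L (word_monom M w) * peval h (letter_freq M w)\<bar>)"
    unfolding bernstein_value_def by (rule sum_abs)
  also have "\<dots> \<le> (\<Sum>w\<in>words M. L (word_monom M w) * simplex_norm h)"
    using assms by (intro sum_mono)
      (simp add: abs_mult L_word_monom_nonneg mult_left_mono abs_peval_le_simplex_norm letter_freq_in_std_simplex)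
  also have "\<dots> = L 1 * simplex_norm h"
    by (simp add: sum_distrib_right[symmetric] sum_L_word_monom)
  finally show ?thesis .
qed

lemma abs_L_le_simplex_norm: "\<bar>L h\<bar> \<le> L 1 * simplex_norm h"
proof (rule tendsto_le[OF _ tendsto_const])
  show "(\<lambda>M. \<bar>bernstein_value M h\<bar>) \<longlonglongrightarrow> \<bar>L h\<bar>"
    by (intro tendsto_rabs bernstein_value_tendsto)
  show "\<forall>\<^sub>F M in sequentially. \<bar>bernstein_value M h\<bar> \<le> L 1 * simplex_norm h"
    using eventually_gt_at_top[of 0] by eventually_elim (rule abs_bernstein_value_le)
qed simp

end

theorem lemma4:
  fixes L :: "'n::finite rpoly \<Rightarrow> real"
  assumes add: "\<And>p q. L (p + q) = L p + L q"
    and scale: "\<And>c p. L (pscale c p) = c * L p"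
    and quot: "\<And>p q. p - q \<in> simplex_ideal \<Longrightarrow> L p = L q"
    and mom_nonneg: "\<And>\<alpha>. L (monom_x \<alpha>) \<ge> 0"
    and one: "L 1 \<le> 1"
  shows "\<forall>f. \<forall>\<epsilon>>0. \<exists>\<delta>>0. \<forall>g. simplex_norm (g - f) < \<delta> \<longrightarrow> \<bar>L g - L f\<bar> < \<epsilon>"
proof (intro allI impI)
  fix f and \<epsilon> :: real
  assume "\<epsilon> > 0"
  interpret simplex_positive_functional L
    using add scale quot mom_nonneg by unfold_locales
  have "\<bar>L g - L f\<bar> \<le> simplex_norm (g - f)" for g
  proof -
    have "\<bar>L g - L f\<bar> = \<bar>L (g - f)\<bar>"
      by (simp add: L_diff)
    also have "\<dots> \<le> L 1 * simplex_norm (g - f)"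
      by (rule abs_L_le_simplex_norm)
    also have "\<dots> \<le> simplex_norm (g - f)"
      using one L_one_nonneg simplex_norm_nonneg[of "g - f"] by (simp add: mult_left_le_one_le)
    finally show ?thesis .
  qed
  then show "\<exists>\<delta>>0. \<forall>g. simplex_norm (g - f) < \<delta> \<longrightarrow> \<bar>L g - L f\<bar> < \<epsilon>"
    using \<open>\<epsilon> > 0\<close> by (meson order.strict_trans1)
qed

end
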